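(* Let $V_i\sim\mathcal M[\underline\sigma_i,\overline\sigma_i]$ with $\underline\sigma_i\le\overline\sigma_i$, $i=1,\dots,d$. The following are equivalent: (1) $V_1\dashrightarrow V_2\dashrightarrow\cdots\dashrightarrow V_d$; (2) $V_{i_1}\dashrightarrow V_{i_2}\dashrightarrow\cdots\dashrightarrow V_{i_d}$ for every permutation $(i_1,\dots,i_d)$ of $(1,\dots,d)$; (3) $(V_1,\dots,V_d)\sim\mathcal M\big(\prod_{i=1}^d[\underline\sigma_i,\overline\sigma_i]\big)$.
   Context: Sublinear expectation space $(\Omega,\mathcal H,\hat{\mathbb E})$, $\hat{\mathbb E}[X]=\sup_{Q\in\mathcal P}E_Q[X]$. $C_{b,Lip}$: bounded Lipschitz functions; $C_{l.Lip}(\mathbb R^d)$: $|\varphi(x)-\varphi(y)|\le C(1+|x|^k+|y|^k)|x-y|$. $X\dashrightarrow Y$ means $\hat{\mathbb E}[\varphi(X,Y)]=\hat{\mathbb E}[\hat{\mathbb E}[\varphi(x,Y)]_{x=X}]$ for all $\varphi\in C_{b,Lip}$; $X_1\dashrightarrow\cdots\dashrightarrow X_n$ means $(X_1,\dots,X_i)\dashrightarrow X_{i+1}$ for each $i$. For a compact convex $\Theta\subset\mathbb R^d$, a random vector $\mathbf V\sim\mathcal M(\Theta)$ (maximal distribution) if $\hat{\mathbb E}[\varphi(\mathbf V)]=\max_{\theta\in\Theta}\varphi(\theta)$ for all $\varphi\in C_{l.Lip}(\mathbb R^d)$; $\mathcal M[a,b]$ is the case $d=1$, $\Theta=[a,b]$.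 *)

theory Defs
  imports "HOL-Probability.Probability" "HOL-Combinatorics.Permutations"
begin

text \<open>Points of R^n are represented as real lists of length n; the Euclidean norm:\<close>
definition lnorm :: "real list \<Rightarrow> real" where
  "lnorm xs = sqrt (sum_list (map (\<lambda>x. x ^ 2) xs))"

definition lLip :: "nat \<Rightarrow> (real list \<Rightarrow> real) \<Rightarrow> bool" where
  "lLip n \<phi> \<longleftrightarrow> (\<exists>C k::nat. \<forall>x y. length x = n \<longrightarrow> length y = n \<longrightarrow>
      \<bar>\<phi> x - \<phi> y\<bar> \<le> C * (1 + lnorm x ^ k + lnorm y ^ k) * lnorm (map2 (-) x y))"

definition bLip :: "nat \<Rightarrow> (real list \<Rightarrow> real) \<Rightarrow> bool" where
  "bLip n \<phi> \<longleftrightarrow> (\<exists>B. \<forall>x. length x = n \<longrightarrow> \<bar>\<phi> x\<bar> \<le> B) \<and>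
     (\<exists>L. \<forall>x y. length x = n \<longrightarrow> length y = n \<longrightarrow> \<bar>\<phi> x - \<phi> y\<bar> \<le> L * lnorm (map2 (-) x y))"

text \<open>Sublinear expectation space (Omega, H, E) with E X = sup over Q in P of E_Q X.\<close>
definition sublinear_expectation_space ::
  "'w set \<Rightarrow> ('w \<Rightarrow> real) set \<Rightarrow> 'w measure set \<Rightarrow> (('w \<Rightarrow> real) \<Rightarrow> real) \<Rightarrow> bool" where
  "sublinear_expectation_space \<Omega> H P E \<longleftrightarrow>
     P \<noteq> {} \<and> (\<forall>Q\<in>P. prob_space Q \<and> space Q = \<Omega>) \<and>
     (\<forall>c. (\<lambda>_. c) \<in> H) \<and>
     (\<forall>X\<in>H. \<forall>Y\<in>H. (\<lambda>w. X w + Y w) \<in> H) \<and>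
     (\<forall>a. \<forall>X\<in>H. (\<lambda>w. a * X w) \<in> H) \<and>
     (\<forall>n \<phi> Xs. lLip n \<phi> \<and> length Xs = n \<and> set Xs \<subseteq> H \<longrightarrow>
         (\<lambda>w. \<phi> (map (\<lambda>X. X w) Xs)) \<in> H) \<and>
     (\<forall>X\<in>H. \<forall>Q\<in>P. integrable Q X) \<and>
     (\<forall>X\<in>H. bdd_above ((\<lambda>Q. integral\<^sup>L Q X) ` P)) \<and>
     (\<forall>X\<in>H. E X = (SUP Q\<in>P. integral\<^sup>L Q X))"

definition vals :: "('w \<Rightarrow> real) list \<Rightarrow> 'w \<Rightarrow> real list" where
  "vals Xs w = map (\<lambda>X. X w) Xs"

text \<open>X --> Y (Y independent of X)\<close>
definition indep_of :: "(('w \<Rightarrow> real) \<Rightarrow> real) \<Rightarrow> ('w \<Rightarrow> real) list \<Rightarrow> ('w \<Rightarrow> real) list \<Rightarrow> bool" where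
  "indep_of E Xs Ys \<longleftrightarrow> (\<forall>\<phi>. bLip (length Xs + length Ys) \<phi> \<longrightarrow>
     E (\<lambda>w. \<phi> (vals Xs w @ vals Ys w)) =
     E (\<lambda>w. (\<lambda>x. E (\<lambda>w'. \<phi> (x @ vals Ys w'))) (vals Xs w)))"

definition seq_indep :: "(('w \<Rightarrow> real) \<Rightarrow> real) \<Rightarrow> ('w \<Rightarrow> real) list \<Rightarrow> bool" where
  "seq_indep E Xs \<longleftrightarrow> (\<forall>i. 0 < i \<and> i < length Xs \<longrightarrow> indep_of E (take i Xs) [Xs ! i])"

definition maximal_dist :: "(('w \<Rightarrow> real) \<Rightarrow> real) \<Rightarrow> ('w \<Rightarrow> real) list \<Rightarrow> real list set \<Rightarrow> bool" where
  "maximal_dist E Xs \<Theta> \<longleftrightarrow> (\<forall>\<phi>. lLip (length Xs) \<phi> \<longrightarrow>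
     (\<exists>\<theta>\<in>\<Theta>. E (\<lambda>w. \<phi> (vals Xs w)) = \<phi> \<theta> \<and> (\<forall>\<theta>'\<in>\<Theta>. \<phi> \<theta>' \<le> \<phi> \<theta>)))"

definition box_list :: "nat \<Rightarrow> (nat \<Rightarrow> real) \<Rightarrow> (nat \<Rightarrow> real) \<Rightarrow> real list set" where
  "box_list d lo hi = {xs. length xs = d \<and> (\<forall>i<d. lo i \<le> xs ! i \<and> xs ! i \<le> hi i)}"

end

theory Submission
  imports Defs
begin

text \<open>
  For a Lipschitz \<open>\<phi>\<close> and \<open>Y \<sim> M[a,b]\<close>, the partial expectation
  \<open>\<psi>(x) = E[\<phi>(x,Y)]\<close> is the maximum of \<open>\<phi>(x,t)\<close> over \<open>t \<in> [a,b]\<close>, and it is again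
  Lipschitz. Hence if \<open>X \<sim> M(B)\<close> for a box \<open>B\<close>, the iterated expectation \<open>E[\<psi>(X)]\<close>
  is the maximum of \<open>\<phi>\<close> over \<open>B \<times> [a,b]\<close>. If \<open>(X,Y) \<sim> M(B \<times> [a,b])\<close>, that maximum
  is also \<open>E[\<phi>(X,Y)]\<close>, which is the independence of \<open>Y\<close> from \<open>X\<close>; conversely,
  independence turns \<open>E[\<phi>(X,Y)]\<close> into \<open>E[\<psi>(X)]\<close>, and induction on the dimension
  gives (1) \<open>\<Rightarrow>\<close> (3). Independence is only required for bounded Lipschitz \<open>\<phi>\<close>, so
  there \<open>\<phi>\<close> is first composed with the projection onto the box, which changes nothing
  quasi-surely because each \<open>V\<^sub>i\<close> lies in \<open>[lo i, hi i]\<close>. Statement (3) is invariant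
  under permuting the coordinates together with the box, which gives (2).
\<close>

lemma sum_list_squares_nonneg: "0 \<le> sum_list (map (\<lambda>x::real. x ^ 2) xs)"
  by (induct xs) auto

lemma lnorm_nonneg: "0 \<le> lnorm xs"
  unfolding lnorm_def by (simp add: sum_list_squares_nonneg)

lemma lnorm_single [simp]: "lnorm [x] = \<bar>x\<bar>"
  by (simp add: lnorm_def)

lemma lnorm_append_sq: "lnorm (xs @ ys) ^ 2 = lnorm xs ^ 2 + lnorm ys ^ 2"
  unfolding lnorm_def by (simp add: sum_list_squares_nonneg)

lemma lnorm_le_iff_sq_le: "lnorm xs \<le> lnorm ys \<longleftrightarrow> lnorm xs ^ 2 \<le> lnorm ys ^ 2"
  using lnorm_nonneg by (simp add: power_mono_iff)

lemma lnorm_eq_iff_sq_eq: "lnorm xs = lnorm ys \<longleftrightarrow> lnorm xs ^ 2 = lnorm ys ^ 2"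
  using lnorm_nonneg by (metis power2_eq_iff_nonneg)

lemma lnorm_le_append: "lnorm xs \<le> lnorm (xs @ ys)"
  unfolding lnorm_le_iff_sq_le lnorm_append_sq by simp

lemma lnorm_take_le: "lnorm (take n xs) \<le> lnorm xs"
  by (metis append_take_drop_id lnorm_le_append)

lemma lnorm_map2_minus_self [simp]: "lnorm (map2 (-) xs xs) = 0"
  unfolding lnorm_def by (induct xs) auto

lemma lnorm_diff_append_same_left:
  "length ys = length zs \<Longrightarrow> lnorm (map2 (-) (xs @ ys) (xs @ zs)) = lnorm (map2 (-) ys zs)"
  unfolding lnorm_eq_iff_sq_eq by (simp add: lnorm_append_sq)

lemma lnorm_diff_append_same_right:
  "length xs = length ys \<Longrightarrow> lnorm (map2 (-) (xs @ zs) (ys @ zs)) = lnorm (map2 (-) xs ys)"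
  unfolding lnorm_eq_iff_sq_eq by (simp add: lnorm_append_sq)

lemma lnorm_mono:
  assumes "length xs = length ys" "\<And>j. j < length xs \<Longrightarrow> \<bar>xs ! j\<bar> \<le> \<bar>ys ! j\<bar>"
  shows "lnorm xs \<le> lnorm ys"
proof -
  have "sum_list (map (\<lambda>x. x ^ 2) xs) \<le> sum_list (map (\<lambda>x. x ^ 2) ys)"
    using assms by (auto simp: sum_list_sum_nth abs_le_square_iff intro!: sum_mono)
  then show ?thesis
    unfolding lnorm_def by simp
qed

lemma lnorm_permute_list:
  assumes "p permutes {..<length xs}"
  shows "lnorm (permute_list p xs) = lnorm xs"
proof -
  have "mset (map (\<lambda>x. x ^ 2) (permute_list p xs)) = mset (map (\<lambda>x. x ^ 2) xs)"
    using assms by simp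
  then show ?thesis
    unfolding lnorm_def by (metis mset_map sum_mset_sum_list)
qed

lemma map2_permute_list:
  assumes "p permutes {..<length xs}" "length xs = length ys"
  shows "map2 f (permute_list p xs) (permute_list p ys) = permute_list p (map2 f xs ys)"
  using assms by (simp add: permute_list_map flip: permute_list_zip)

lemma permute_list_map_upt:
  "p permutes {0..<d} \<Longrightarrow> permute_list p (map f [0..<d]) = map (\<lambda>j. f (p j)) [0..<d]"
  using permutes_in_image by (fastforce simp: permute_list_def)

definition lipschitz_list :: "nat \<Rightarrow> real \<Rightarrow> (real list \<Rightarrow> real) \<Rightarrow> bool" where
  "lipschitz_list n L \<phi> \<longleftrightarrow>
     (\<forall>x y. length x = n \<longrightarrow> length y = n \<longrightarrow> \<bar>\<phi> x - \<phi> y\<bar> \<le> L * lnorm (map2 (-) x y))"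

lemma lipschitz_list_imp_lLip:
  assumes "lipschitz_list n L \<phi>"
  shows "lLip n \<phi>"
  unfolding lLip_def
proof (intro exI[of _ "\<bar>L\<bar>"] exI[of _ "0::nat"] allI impI)
  fix x y :: "real list"
  assume "length x = n" "length y = n"
  then have "\<bar>\<phi> x - \<phi> y\<bar> \<le> L * lnorm (map2 (-) x y)"
    using assms unfolding lipschitz_list_def by blast
  also have "\<dots> \<le> \<bar>L\<bar> * (1 + lnorm x ^ 0 + lnorm y ^ 0) * lnorm (map2 (-) x y)"
    using lnorm_nonneg[of "map2 (-) x y"] by (simp add: mult_right_mono)
  finally show "\<bar>\<phi> x - \<phi> y\<bar> \<le> \<bar>L\<bar> * (1 + lnorm x ^ 0 + lnorm y ^ 0) * lnorm (map2 (-) x y)" .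
qed

lemma bLip_imp_lipschitz_list: "bLip n \<phi> \<Longrightarrow> \<exists>L. lipschitz_list n L \<phi>"
  unfolding bLip_def lipschitz_list_def by blast

lemma lipschitz_list_append_left:
  assumes "lipschitz_list (m + k) L \<phi>" "length x = m"
  shows "lipschitz_list k L (\<lambda>ys. \<phi> (x @ ys))"
  using assms unfolding lipschitz_list_def
  by (metis length_append lnorm_diff_append_same_left)

lemma lLip_comp_nonexpansive:
  assumes \<phi>: "lLip m \<phi>"
    and len: "\<And>x. length x = n \<Longrightarrow> length (g x) = m"
    and norm_le: "\<And>x. length x = n \<Longrightarrow> lnorm (g x) \<le> lnorm x"
    and diff_le: "\<And>x y. length x = n \<Longrightarrow> length y = n \<Longrightarrow>
                 lnorm (map2 (-) (g x) (g y)) \<le> lnorm (map2 (-) x y)"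
  shows "lLip n (\<lambda>x. \<phi> (g x))"
proof -
  obtain C and k :: nat where C: "\<And>x y. length x = m \<Longrightarrow> length y = m \<Longrightarrow>
      \<bar>\<phi> x - \<phi> y\<bar> \<le> C * (1 + lnorm x ^ k + lnorm y ^ k) * lnorm (map2 (-) x y)"
    using \<phi> unfolding lLip_def by blast
  have "\<bar>\<phi> (g x) - \<phi> (g y)\<bar> \<le> \<bar>C\<bar> * (1 + lnorm x ^ k + lnorm y ^ k) * lnorm (map2 (-) x y)"
    if "length x = n" "length y = n" for x y
  proof -
    have "\<bar>\<phi> (g x) - \<phi> (g y)\<bar>
          \<le> C * (1 + lnorm (g x) ^ k + lnorm (g y) ^ k) * lnorm (map2 (-) (g x) (g y))"
      using C len that by blast
    also have "\<dots> \<le> \<bar>C\<bar> * (1 + lnorm x ^ k + lnorm y ^ k) * lnorm (map2 (-) x y)"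
    proof (rule mult_mono)
      show "C * (1 + lnorm (g x) ^ k + lnorm (g y) ^ k) \<le> \<bar>C\<bar> * (1 + lnorm x ^ k + lnorm y ^ k)"
        using norm_le that lnorm_nonneg
        by (intro mult_mono abs_ge_self add_mono power_mono) (auto simp: add_nonneg_nonneg)
    qed (use diff_le that lnorm_nonneg in auto)
    finally show ?thesis .
  qed
  then show ?thesis
    unfolding lLip_def by blast
qed

lemma lLip_take:
  assumes "lLip m \<phi>" "m \<le> n"
  shows "lLip n (\<lambda>x. \<phi> (take m x))"
proof (rule lLip_comp_nonexpansive[OF assms(1)])
  fix x y :: "real list"
  show "lnorm (take m x) \<le> lnorm x" by (rule lnorm_take_le)
  have "map2 (-) (take m x) (take m y) = take m (map2 (-) x y)"
    by (simp add: take_map take_zip)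
  then show "lnorm (map2 (-) (take m x) (take m y)) \<le> lnorm (map2 (-) x y)"
    by (simp add: lnorm_take_le)
qed (use assms(2) in simp)

lemma lLip_permute_list:
  assumes "lLip n \<phi>" "p permutes {..<n}"
  shows "lLip n (\<lambda>x. \<phi> (permute_list p x))"
  by (rule lLip_comp_nonexpansive[OF assms(1)])
    (use assms(2) in \<open>simp_all add: lnorm_permute_list map2_permute_list\<close>)

lemma lLip_imp_lipschitz_on_ball:
  assumes "lLip n \<phi>"
  obtains K where "0 \<le> K"
    "\<And>x y. length x = n \<Longrightarrow> length y = n \<Longrightarrow> lnorm x \<le> R \<Longrightarrow> lnorm y \<le> R \<Longrightarrow>
       \<bar>\<phi> x - \<phi> y\<bar> \<le> K * lnorm (map2 (-) x y)"
proof -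
  obtain C and k :: nat where C: "\<And>x y. length x = n \<Longrightarrow> length y = n \<Longrightarrow>
      \<bar>\<phi> x - \<phi> y\<bar> \<le> C * (1 + lnorm x ^ k + lnorm y ^ k) * lnorm (map2 (-) x y)"
    using assms unfolding lLip_def by blast
  define K where "K = \<bar>C\<bar> * (1 + \<bar>R\<bar> ^ k + \<bar>R\<bar> ^ k)"
  have "\<bar>\<phi> x - \<phi> y\<bar> \<le> K * lnorm (map2 (-) x y)"
    if "length x = n" "length y = n" "lnorm x \<le> R" "lnorm y \<le> R" for x y
  proof -
    have "\<bar>\<phi> x - \<phi> y\<bar> \<le> C * (1 + lnorm x ^ k + lnorm y ^ k) * lnorm (map2 (-) x y)"
      using C that by blast
    also have "\<dots> \<le> K * lnorm (map2 (-) x y)"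
    proof (rule mult_right_mono)
      show "C * (1 + lnorm x ^ k + lnorm y ^ k) \<le> K"
        unfolding K_def using that lnorm_nonneg
        by (intro mult_mono abs_ge_self add_mono power_mono) (auto simp: add_nonneg_nonneg)
    qed (rule lnorm_nonneg)
    finally show ?thesis .
  qed
  moreover have "0 \<le> K"
    by (simp add: K_def)
  ultimately show ?thesis
    using that by blast
qed

lemma box_list_Suc:
  "box_list (Suc m) lo hi = {x @ [t] | x t. x \<in> box_list m lo hi \<and> t \<in> {lo m..hi m}}"
proof (intro set_eqI iffI)
  fix z assume z: "z \<in> box_list (Suc m) lo hi"
  then have "z = take m z @ [z ! m]"
    using take_Suc_conv_app_nth[of m z] unfolding box_list_def by simp
  moreover have "take m z \<in> box_list m lo hi" "z ! m \<in> {lo m..hi m}"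
    using z unfolding box_list_def by auto
  ultimately show "z \<in> {x @ [t] | x t. x \<in> box_list m lo hi \<and> t \<in> {lo m..hi m}}"
    by blast
next
  fix z assume "z \<in> {x @ [t] | x t. x \<in> box_list m lo hi \<and> t \<in> {lo m..hi m}}"
  then obtain x t where "z = x @ [t]" "x \<in> box_list m lo hi" "t \<in> {lo m..hi m}"
    by blast
  then show "z \<in> box_list (Suc m) lo hi"
    unfolding box_list_def by (simp add: nth_append less_Suc_eq)
qed

lemma box_list_0 [simp]: "box_list 0 lo hi = {[]}"
  by (auto simp: box_list_def)

lemma permute_list_box_list:
  assumes p: "p permutes {..<d}"
  shows "permute_list p ` box_list d lo hi = box_list d (\<lambda>j. lo (p j)) (\<lambda>j. hi (p j))"
proof (intro set_eqI iffI)
  fix z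
  assume "z \<in> permute_list p ` box_list d lo hi"
  then obtain x where "z = permute_list p x" "x \<in> box_list d lo hi" by blast
  then show "z \<in> box_list d (\<lambda>j. lo (p j)) (\<lambda>j. hi (p j))"
    using p permutes_in_image[OF p] by (simp add: box_list_def permute_list_nth)
next
  fix z
  assume z: "z \<in> box_list d (\<lambda>j. lo (p j)) (\<lambda>j. hi (p j))"
  then have "length z = d" by (simp add: box_list_def)
  have "permute_list p (permute_list (inv p) z) = permute_list (inv p \<circ> p) z"
    using p \<open>length z = d\<close> by (simp add: permute_list_compose)
  then have "z = permute_list p (permute_list (inv p) z)"
    using p by (simp add: permutes_inv_o(2))
  moreover have "permute_list (inv p) z \<in> box_list d lo hi"
  proof -
    have ip: "inv p permutes {..<length z}"
      using permutes_inv[OF p] \<open>length z = d\<close> by simp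
    have "lo j \<le> z ! inv p j \<and> z ! inv p j \<le> hi j" if "j < d" for j
    proof -
      have "inv p j < d"
        using permutes_in_image[OF ip] that \<open>length z = d\<close> by simp
      then show ?thesis
        using z permutes_inverses(1)[OF p, of j] unfolding box_list_def by force
    qed
    then show ?thesis
      using ip \<open>length z = d\<close> by (simp add: box_list_def permute_list_nth)
  qed
  ultimately show "z \<in> permute_list p ` box_list d lo hi"
    by blast
qed
lemma take_box_list:
  assumes "n \<le> d" "\<And>j. j < d \<Longrightarrow> lo j \<le> hi j"
  shows "take n ` box_list d lo hi = box_list n lo hi"
proof (intro set_eqI iffI)
  fix x
  assume "x \<in> take n ` box_list d lo hi"
  then show "x \<in> box_list n lo hi"
    using assms(1) by (auto simp: box_list_def)
next
  fix x
  assume x: "x \<in> box_list n lo hi"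
  then have "x @ map lo [n..<d] \<in> box_list d lo hi"
    using assms unfolding box_list_def by (auto simp: nth_append)
  moreover have "x = take n (x @ map lo [n..<d])"
    using x by (simp add: box_list_def)
  ultimately show "x \<in> take n ` box_list d lo hi"
    by blast
qed

definition box_proj :: "nat \<Rightarrow> (nat \<Rightarrow> real) \<Rightarrow> (nat \<Rightarrow> real) \<Rightarrow> real list \<Rightarrow> real list" where
  "box_proj n lo hi x = map (\<lambda>j. max (lo j) (min (hi j) (x ! j))) [0..<n]"

lemma length_box_proj [simp]: "length (box_proj n lo hi x) = n"
  by (simp add: box_proj_def)

lemma box_proj_in_box_list:
  "(\<And>j. j < n \<Longrightarrow> lo j \<le> hi j) \<Longrightarrow> box_proj n lo hi x \<in> box_list n lo hi"
  by (auto simp: box_proj_def box_list_def)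

lemma box_proj_eq_self: "x \<in> box_list n lo hi \<Longrightarrow> box_proj n lo hi x = x"
  by (auto simp: box_proj_def box_list_def intro!: nth_equalityI)

lemma box_proj_nonexpansive:
  "length x = n \<Longrightarrow> length y = n \<Longrightarrow>
    lnorm (map2 (-) (box_proj n lo hi x) (box_proj n lo hi y)) \<le> lnorm (map2 (-) x y)"
  unfolding box_proj_def by (rule lnorm_mono) (auto simp: abs_le_iff)

lemma bLip_comp_box_proj:
  assumes \<phi>: "lLip n \<phi>" and le: "\<And>j. j < n \<Longrightarrow> lo j \<le> hi j"
  shows "bLip n (\<lambda>x. \<phi> (box_proj n lo hi x))"
proof -
  define R where "R = lnorm (map (\<lambda>j. \<bar>lo j\<bar> + \<bar>hi j\<bar>) [0..<n])"
  have in_box: "box_proj n lo hi x \<in> box_list n lo hi" for x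
    using box_proj_in_box_list le by blast
  have entry_bound: "\<bar>a\<bar> \<le> \<bar>l\<bar> + \<bar>h\<bar>" "\<bar>a - b\<bar> \<le> \<bar>l\<bar> + \<bar>h\<bar>"
    if "l \<le> a" "a \<le> h" "l \<le> b" "b \<le> h" for l h a b :: real
    using that by arith+
  have norm_le_R: "lnorm y \<le> R" if "y \<in> box_list n lo hi" for y
    using that entry_bound(1) unfolding R_def box_list_def by (auto intro!: lnorm_mono)
  have diff_le_R: "lnorm (map2 (-) y z) \<le> R"
    if "y \<in> box_list n lo hi" "z \<in> box_list n lo hi" for y z
    using that entry_bound(2) unfolding R_def box_list_def by (auto intro!: lnorm_mono)
  obtain K where "0 \<le> K" and K: "\<And>x y. length x = n \<Longrightarrow> length y = n \<Longrightarrow>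
      lnorm x \<le> R \<Longrightarrow> lnorm y \<le> R \<Longrightarrow> \<bar>\<phi> x - \<phi> y\<bar> \<le> K * lnorm (map2 (-) x y)"
    using lLip_imp_lipschitz_on_ball[OF \<phi>] by blast
  have proj_diff: "\<bar>\<phi> (box_proj n lo hi x) - \<phi> (box_proj n lo hi y)\<bar>
      \<le> K * lnorm (map2 (-) (box_proj n lo hi x) (box_proj n lo hi y))" for x y
    by (rule K) (simp_all add: norm_le_R in_box)
  show ?thesis
    unfolding bLip_def
  proof (intro conjI exI allI impI)
    fix x :: "real list"
    have "\<bar>\<phi> (box_proj n lo hi x) - \<phi> (box_proj n lo hi [])\<bar> \<le> K * R"
      using proj_diff[of x "[]"] diff_le_R[OF in_box in_box] \<open>0 \<le> K\<close>
      by (meson mult_left_mono order_trans)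
    then show "\<bar>\<phi> (box_proj n lo hi x)\<bar> \<le> \<bar>\<phi> (box_proj n lo hi [])\<bar> + K * R"
      by linarith
  next
    fix x y :: "real list"
    assume "length x = n" "length y = n"
    then show "\<bar>\<phi> (box_proj n lo hi x) - \<phi> (box_proj n lo hi y)\<bar> \<le> K * lnorm (map2 (-) x y)"
      using proj_diff[of x y] box_proj_nonexpansive \<open>0 \<le> K\<close>
      by (meson mult_left_mono order_trans)
  qed
qed

section \<open>Maxima and maximal distributions\<close>

lemma vals_append: "vals (Xs @ Ys) w = vals Xs w @ vals Ys w"
  by (simp add: vals_def)

lemma vals_take: "vals (take n Xs) w = take n (vals Xs w)"
  by (simp add: vals_def take_map)

lemma vals_permute_list:
  "p permutes {..<length Xs} \<Longrightarrow> vals (permute_list p Xs) w = permute_list p (vals Xs w)"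
  by (simp add: vals_def permute_list_map)

definition has_max_on :: "('a \<Rightarrow> 'b::order) \<Rightarrow> 'a set \<Rightarrow> 'b \<Rightarrow> bool" where
  "has_max_on f S v \<longleftrightarrow> (\<exists>x\<in>S. f x = v) \<and> (\<forall>x\<in>S. f x \<le> v)"

lemma has_max_on_unique: "has_max_on f S u \<Longrightarrow> has_max_on f S v \<Longrightarrow> u = v"
  unfolding has_max_on_def by (metis order.antisym)

lemma has_max_on_image: "has_max_on f (g ` S) v \<longleftrightarrow> has_max_on (\<lambda>x. f (g x)) S v"
  unfolding has_max_on_def by auto

lemma has_max_on_cong: "(\<And>x. x \<in> S \<Longrightarrow> f x = g x) \<Longrightarrow> has_max_on f S v \<longleftrightarrow> has_max_on g S v"
  unfolding has_max_on_def by auto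

lemma has_max_on_abs_diff_le:
  fixes f g :: "'a \<Rightarrow> real"
  assumes "has_max_on f S u" "has_max_on g S v" "\<And>x. x \<in> S \<Longrightarrow> \<bar>f x - g x\<bar> \<le> M"
  shows "\<bar>u - v\<bar> \<le> M"
proof -
  obtain x y where "x \<in> S" "f x = u" "y \<in> S" "g y = v" "f y \<le> u" "g x \<le> v"
    using assms(1,2) unfolding has_max_on_def by metis
  then show ?thesis
    using assms(3)[of x] assms(3)[of y] by linarith
qed

lemma has_max_on_iterated:
  assumes inner: "\<And>x. x \<in> A \<Longrightarrow> has_max_on (\<lambda>t. f (x @ [t])) B (g x)"
    and outer: "has_max_on g A v"
  shows "has_max_on f {x @ [t] | x t. x \<in> A \<and> t \<in> B} v"
proof -
  obtain x where x: "x \<in> A" "g x = v" and g_le: "\<And>y. y \<in> A \<Longrightarrow> g y \<le> v"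
    using outer unfolding has_max_on_def by blast
  obtain t where "t \<in> B" "f (x @ [t]) = g x"
    using inner[OF x(1)] unfolding has_max_on_def by blast
  moreover have "f (y @ [s]) \<le> v" if "y \<in> A" "s \<in> B" for y s
    using inner[OF that(1)] g_le[OF that(1)] that(2) unfolding has_max_on_def by fastforce
  ultimately show ?thesis
    using x unfolding has_max_on_def by blast
qed

lemma maximal_dist_iff:
  "maximal_dist E Xs \<Theta> \<longleftrightarrow> (\<forall>\<phi>. lLip (length Xs) \<phi> \<longrightarrow> has_max_on \<phi> \<Theta> (E (\<lambda>w. \<phi> (vals Xs w))))"
  unfolding maximal_dist_def has_max_on_def by metis

lemma maximal_dist_has_max_on:
  "maximal_dist E Xs \<Theta> \<Longrightarrow> lLip (length Xs) \<phi> \<Longrightarrow> has_max_on \<phi> \<Theta> (E (\<lambda>w. \<phi> (vals Xs w)))"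
  by (simp add: maximal_dist_iff)

lemma singletons_interval: "{[t] | t. a \<le> t \<and> t \<le> b} = (\<lambda>t. [t]) ` {a..b}"
  by auto

lemma maximal_dist_section_expectation:
  assumes Y: "maximal_dist E [Y] {[t] | t. a \<le> t \<and> t \<le> b}"
    and \<phi>: "lipschitz_list (Suc m) L \<phi>" and x: "length x = m"
  shows "has_max_on (\<lambda>t. \<phi> (x @ [t])) {a..b} (E (\<lambda>w. \<phi> (x @ vals [Y] w)))"
proof -
  have "lipschitz_list 1 L (\<lambda>ys. \<phi> (x @ ys))"
    using lipschitz_list_append_left[of m 1] \<phi> x by simp
  then have "lLip (length [Y]) (\<lambda>ys. \<phi> (x @ ys))"
    by (simp add: lipschitz_list_imp_lLip)
  then show ?thesis
    using maximal_dist_has_max_on[OF Y] by (simp add: singletons_interval has_max_on_image)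
qed

lemma lipschitz_list_section_expectation:
  assumes Y: "maximal_dist E [Y] {[t] | t. a \<le> t \<and> t \<le> b}"
    and \<phi>: "lipschitz_list (Suc m) L \<phi>"
  shows "lipschitz_list m L (\<lambda>x. E (\<lambda>w. \<phi> (x @ vals [Y] w)))"
  unfolding lipschitz_list_def
proof (intro allI impI)
  fix x y :: "real list"
  assume "length x = m" "length y = m"
  moreover have "\<bar>\<phi> (x @ [t]) - \<phi> (y @ [t])\<bar> \<le> L * lnorm (map2 (-) x y)"
    if "length x = m" "length y = m" for t
    using \<phi> that unfolding lipschitz_list_def
    by (metis length_append_singleton lnorm_diff_append_same_right)
  ultimately show "\<bar>E (\<lambda>w. \<phi> (x @ vals [Y] w)) - E (\<lambda>w. \<phi> (y @ vals [Y] w))\<bar>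
      \<le> L * lnorm (map2 (-) x y)"
    using maximal_dist_section_expectation[OF Y \<phi>] by (blast intro: has_max_on_abs_diff_le)
qed

lemma has_max_on_box_iterated_expectation:
  assumes X: "maximal_dist E Xs (box_list m lo hi)" and len: "length Xs = m"
    and Y: "maximal_dist E [Y] {[t] | t. lo m \<le> t \<and> t \<le> hi m}"
    and \<phi>: "lipschitz_list (Suc m) L \<phi>"
  shows "has_max_on \<phi> (box_list (Suc m) lo hi) (E (\<lambda>w. E (\<lambda>w'. \<phi> (vals Xs w @ vals [Y] w'))))"
proof -
  define \<psi> where "\<psi> x = E (\<lambda>w'. \<phi> (x @ vals [Y] w'))" for x
  have "lLip (length Xs) \<psi>"
    unfolding \<psi>_def len
    by (rule lipschitz_list_imp_lLip[OF lipschitz_list_section_expectation[OF Y \<phi>]])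
  then have outer: "has_max_on \<psi> (box_list m lo hi) (E (\<lambda>w. \<psi> (vals Xs w)))"
    by (rule maximal_dist_has_max_on[OF X])
  have inner: "has_max_on (\<lambda>t. \<phi> (x @ [t])) {lo m..hi m} (\<psi> x)" if "x \<in> box_list m lo hi" for x
    unfolding \<psi>_def
    by (rule maximal_dist_section_expectation[OF Y \<phi>]) (use that in \<open>simp add: box_list_def\<close>)
  show ?thesis
    using has_max_on_iterated[OF inner outer] unfolding box_list_Suc \<psi>_def .
qed

lemma maximal_dist_take:
  assumes X: "maximal_dist E Xs (box_list d lo hi)" and len: "length Xs = d"
    and "n \<le> d" and le: "\<And>j. j < d \<Longrightarrow> lo j \<le> hi j"
  shows "maximal_dist E (take n Xs) (box_list n lo hi)"
  unfolding maximal_dist_iff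
proof (intro allI impI)
  fix \<phi>
  assume "lLip (length (take n Xs)) \<phi>"
  then have "lLip (length Xs) (\<lambda>x. \<phi> (take n x))"
    using \<open>n \<le> d\<close> len by (simp add: lLip_take min_absorb2)
  then have "has_max_on (\<lambda>x. \<phi> (take n x)) (box_list d lo hi) (E (\<lambda>w. \<phi> (take n (vals Xs w))))"
    by (rule maximal_dist_has_max_on[OF X])
  then show "has_max_on \<phi> (box_list n lo hi) (E (\<lambda>w. \<phi> (vals (take n Xs) w)))"
    by (simp add: vals_take flip: take_box_list[OF \<open>n \<le> d\<close> le] has_max_on_image)
qed

lemma maximal_dist_permute_list:
  assumes X: "maximal_dist E Xs \<Theta>" and p: "p permutes {..<length Xs}"
  shows "maximal_dist E (permute_list p Xs) (permute_list p ` \<Theta>)"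
  unfolding maximal_dist_iff
proof (intro allI impI)
  fix \<phi>
  assume "lLip (length (permute_list p Xs)) \<phi>"
  then have "lLip (length Xs) (\<lambda>x. \<phi> (permute_list p x))"
    using p by (simp add: lLip_permute_list)
  then show "has_max_on \<phi> (permute_list p ` \<Theta>) (E (\<lambda>w. \<phi> (vals (permute_list p Xs) w)))"
    using maximal_dist_has_max_on[OF X] p by (simp add: has_max_on_image vals_permute_list)
qed

lemma expectation_const:
  assumes "sublinear_expectation_space \<Omega> H P E"
  shows "E (\<lambda>_. c) = c"
proof -
  have "P \<noteq> {}" and prob: "\<And>Q. Q \<in> P \<Longrightarrow> prob_space Q"
    using assms unfolding sublinear_expectation_space_def by auto
  have "E (\<lambda>_. c) = (SUP Q\<in>P. integral\<^sup>L Q (\<lambda>_. c))"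
    using assms unfolding sublinear_expectation_space_def by auto
  also have "\<dots> = (SUP Q\<in>P. c)"
    by (rule SUP_cong) (simp_all add: prob_space.prob_space[OF prob])
  finally show ?thesis
    using \<open>P \<noteq> {}\<close> by simp
qed

lemma expectation_cong_AE:
  assumes space: "sublinear_expectation_space \<Omega> H P E"
    and "X \<in> H" "Y \<in> H" and ae: "\<And>Q. Q \<in> P \<Longrightarrow> AE w in Q. X w = Y w"
  shows "E X = E Y"
proof -
  have int: "\<And>Z Q. Z \<in> H \<Longrightarrow> Q \<in> P \<Longrightarrow> integrable Q Z"
    and E: "\<And>Z. Z \<in> H \<Longrightarrow> E Z = (SUP Q\<in>P. integral\<^sup>L Q Z)"
    using space unfolding sublinear_expectation_space_def by auto
  have "integral\<^sup>L Q X = integral\<^sup>L Q Y" if "Q \<in> P" for Q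
    using ae[OF that] int[OF \<open>X \<in> H\<close> that] int[OF \<open>Y \<in> H\<close> that]
    by (intro integral_cong_AE) auto
  then show ?thesis
    using E[OF \<open>X \<in> H\<close>] E[OF \<open>Y \<in> H\<close>] by (simp cong: SUP_cong)
qed

lemma AE_eq_0_if_expectation_nonpos:
  assumes space: "sublinear_expectation_space \<Omega> H P E"
    and "g \<in> H" "E g \<le> 0" "\<And>w. 0 \<le> g w" "Q \<in> P"
  shows "AE w in Q. g w = 0"
proof -
  have int: "integrable Q g" and "bdd_above ((\<lambda>Q. integral\<^sup>L Q g) ` P)"
    and "E g = (SUP Q\<in>P. integral\<^sup>L Q g)"
    using space assms(2,5) unfolding sublinear_expectation_space_def by auto
  then have "integral\<^sup>L Q g \<le> 0"
    using cSUP_upper[OF \<open>Q \<in> P\<close>] \<open>E g \<le> 0\<close> by fastforce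
  then have "integral\<^sup>L Q g = 0"
    using assms(4) by (simp add: order.antisym)
  then show ?thesis
    using integral_nonneg_eq_0_iff_AE[OF int] assms(4) by simp
qed

lemma lLip_comp_in_H:
  "sublinear_expectation_space \<Omega> H P E \<Longrightarrow> lLip (length Xs) \<phi> \<Longrightarrow> set Xs \<subseteq> H \<Longrightarrow>
    (\<lambda>w. \<phi> (vals Xs w)) \<in> H"
  unfolding sublinear_expectation_space_def vals_def by blast

lemma maximal_dist_interval_AE:
  assumes space: "sublinear_expectation_space \<Omega> H P E"
    and "X \<in> H" and X: "maximal_dist E [X] {[t] | t. a \<le> t \<and> t \<le> b}" and "Q \<in> P"
  shows "AE w in Q. a \<le> X w \<and> X w \<le> b"
proof -
  define dist_ab where "dist_ab t = max 0 (max (t - b) (a - t))" for t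
  have "lipschitz_list 1 1 (\<lambda>ys. dist_ab (hd ys))"
    unfolding lipschitz_list_def
  proof (intro allI impI)
    fix ys zs :: "real list"
    assume "length ys = 1" "length zs = 1"
    then obtain u v where "ys = [u]" "zs = [v]"
      by (metis One_nat_def length_0_conv length_Suc_conv)
    then show "\<bar>dist_ab (hd ys) - dist_ab (hd zs)\<bar> \<le> 1 * lnorm (map2 (-) ys zs)"
      by (simp add: dist_ab_def)
  qed
  then have lip: "lLip (length [X]) (\<lambda>ys. dist_ab (hd ys))"
    by (simp add: lipschitz_list_imp_lLip)
  then have "has_max_on dist_ab {a..b} (E (\<lambda>w. dist_ab (X w)))"
    using maximal_dist_has_max_on[OF X lip]
    by (simp add: singletons_interval has_max_on_image vals_def)
  then have "E (\<lambda>w. dist_ab (X w)) \<le> 0"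
    unfolding has_max_on_def dist_ab_def by auto
  moreover have "(\<lambda>w. dist_ab (X w)) \<in> H"
    using lLip_comp_in_H[OF space lip] \<open>X \<in> H\<close> by (simp add: vals_def)
  ultimately have "AE w in Q. dist_ab (X w) = 0"
    using AE_eq_0_if_expectation_nonpos[OF space _ _ _ \<open>Q \<in> P\<close>] by (simp add: dist_ab_def)
  then show ?thesis
    by eventually_elim (auto simp: dist_ab_def)
qed

lemma expectation_box_proj:
  assumes space: "sublinear_expectation_space \<Omega> H P E"
    and H: "set Vs \<subseteq> H" and len: "length Vs = n" and le: "\<And>j. j < n \<Longrightarrow> lo j \<le> hi j"
    and ae: "\<And>Q. Q \<in> P \<Longrightarrow> AE w in Q. vals Vs w \<in> box_list n lo hi"
    and \<phi>: "lLip n \<phi>"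
  shows "E (\<lambda>w. \<phi> (vals Vs w)) = E (\<lambda>w. \<phi> (box_proj n lo hi (vals Vs w)))"
proof (rule expectation_cong_AE[OF space])
  show "(\<lambda>w. \<phi> (vals Vs w)) \<in> H"
    using lLip_comp_in_H[OF space _ H] \<phi> len by simp
  have "bLip n (\<lambda>x. \<phi> (box_proj n lo hi x))"
    by (rule bLip_comp_box_proj[OF \<phi> le])
  then obtain L where "lipschitz_list n L (\<lambda>x. \<phi> (box_proj n lo hi x))"
    using bLip_imp_lipschitz_list by blast
  then have "lLip (length Vs) (\<lambda>x. \<phi> (box_proj n lo hi x))"
    using len by (simp add: lipschitz_list_imp_lLip)
  then show "(\<lambda>w. \<phi> (box_proj n lo hi (vals Vs w))) \<in> H"
    using lLip_comp_in_H[OF space _ H] by blast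
  show "AE w in Q. \<phi> (vals Vs w) = \<phi> (box_proj n lo hi (vals Vs w))" if "Q \<in> P" for Q
    using ae[OF that] by eventually_elim (simp add: box_proj_eq_self)
qed

lemma indep_of_Nil:
  assumes "sublinear_expectation_space \<Omega> H P E"
  shows "indep_of E [] Ys"
  unfolding indep_of_def by (simp add: vals_def expectation_const[OF assms])

section \<open>Independence versus maximal distribution on a box\<close>

lemma indep_of_if_maximal_dist_append:
  assumes X: "maximal_dist E Xs (box_list m lo hi)" and len: "length Xs = m"
    and Y: "maximal_dist E [Y] {[t] | t. lo m \<le> t \<and> t \<le> hi m}"
    and XY: "maximal_dist E (Xs @ [Y]) (box_list (Suc m) lo hi)"
  shows "indep_of E Xs [Y]"
  unfolding indep_of_def
proof (intro allI impI)
  fix \<phi>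
  assume "bLip (length Xs + length [Y]) \<phi>"
  then obtain L where \<phi>: "lipschitz_list (Suc m) L \<phi>"
    using len bLip_imp_lipschitz_list by auto
  have "has_max_on \<phi> (box_list (Suc m) lo hi) (E (\<lambda>w. \<phi> (vals Xs w @ vals [Y] w)))"
    using maximal_dist_has_max_on[OF XY] lipschitz_list_imp_lLip[OF \<phi>] len
    by (simp add: vals_append)
  then show "E (\<lambda>w. \<phi> (vals Xs w @ vals [Y] w)) =
      E (\<lambda>w. (\<lambda>x. E (\<lambda>w'. \<phi> (x @ vals [Y] w'))) (vals Xs w))"
    using has_max_on_box_iterated_expectation[OF X len Y \<phi>] by (simp add: has_max_on_unique)
qed

lemma maximal_dist_append_if_indep_of:
  assumes space: "sublinear_expectation_space \<Omega> H P E"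
    and X: "maximal_dist E Xs (box_list m lo hi)" and len: "length Xs = m"
    and Y: "maximal_dist E [Y] {[t] | t. lo m \<le> t \<and> t \<le> hi m}"
    and indep: "indep_of E Xs [Y]"
    and H: "set (Xs @ [Y]) \<subseteq> H" and le: "\<And>j. j < Suc m \<Longrightarrow> lo j \<le> hi j"
    and ae: "\<And>Q. Q \<in> P \<Longrightarrow> AE w in Q. vals (Xs @ [Y]) w \<in> box_list (Suc m) lo hi"
  shows "maximal_dist E (Xs @ [Y]) (box_list (Suc m) lo hi)"
  unfolding maximal_dist_iff
proof (intro allI impI)
  fix \<phi>
  assume "lLip (length (Xs @ [Y])) \<phi>"
  then have \<phi>: "lLip (Suc m) \<phi>"
    using len by simp
  define \<phi>p where "\<phi>p x = \<phi> (box_proj (Suc m) lo hi x)" for x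
  have "bLip (Suc m) \<phi>p"
    unfolding \<phi>p_def by (rule bLip_comp_box_proj[OF \<phi> le])
  then obtain L where \<phi>p: "lipschitz_list (Suc m) L \<phi>p"
    using bLip_imp_lipschitz_list by blast
  have "E (\<lambda>w. \<phi> (vals (Xs @ [Y]) w)) = E (\<lambda>w. \<phi>p (vals (Xs @ [Y]) w))"
    unfolding \<phi>p_def using expectation_box_proj[OF space H _ le ae \<phi>] len by simp
  also have "\<dots> = E (\<lambda>w. E (\<lambda>w'. \<phi>p (vals Xs w @ vals [Y] w')))"
    using indep \<open>bLip (Suc m) \<phi>p\<close> len unfolding indep_of_def by (simp add: vals_append)
  finally have "has_max_on \<phi>p (box_list (Suc m) lo hi) (E (\<lambda>w. \<phi> (vals (Xs @ [Y]) w)))"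
    using has_max_on_box_iterated_expectation[OF X len Y \<phi>p] by simp
  then show "has_max_on \<phi> (box_list (Suc m) lo hi) (E (\<lambda>w. \<phi> (vals (Xs @ [Y]) w)))"
    by (rule iffD1[OF has_max_on_cong, rotated]) (simp add: \<phi>p_def box_proj_eq_self)
qed

lemma seq_indep_if_maximal_dist_box:
  assumes V: "maximal_dist E (map V [0..<d]) (box_list d lo hi)"
    and Vi: "\<And>i. i < d \<Longrightarrow> maximal_dist E [V i] {[t] | t. lo i \<le> t \<and> t \<le> hi i}"
    and le: "\<And>i. i < d \<Longrightarrow> lo i \<le> hi i"
  shows "seq_indep E (map V [0..<d])"
  unfolding seq_indep_def
proof (intro allI impI)
  fix i
  assume "0 < i \<and> i < length (map V [0..<d])"
  then have "i < d" by simp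
  have marginal: "maximal_dist E (map V [0..<n]) (box_list n lo hi)" if "n \<le> d" for n
    using maximal_dist_take[OF V _ that le] that by (simp add: take_map)
  have "indep_of E (map V [0..<i]) [V i]"
  proof (rule indep_of_if_maximal_dist_append)
    show "maximal_dist E (map V [0..<i] @ [V i]) (box_list (Suc i) lo hi)"
      using marginal[of "Suc i"] \<open>i < d\<close> by simp
  qed (use marginal Vi \<open>i < d\<close> in auto)
  then show "indep_of E (take i (map V [0..<d])) [map V [0..<d] ! i]"
    using \<open>i < d\<close> by (simp add: take_map)
qed

lemma seq_indep_imp_indep_of_take:
  assumes "sublinear_expectation_space \<Omega> H P E" "seq_indep E Xs" "i < length Xs"
  shows "indep_of E (take i Xs) [Xs ! i]"
  using assms indep_of_Nil[OF assms(1)] unfolding seq_indep_def by (cases "i = 0") auto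

lemma AE_vals_in_box_list:
  assumes space: "sublinear_expectation_space \<Omega> H P E"
    and inH: "\<And>i. i < n \<Longrightarrow> V i \<in> H"
    and maxV: "\<And>i. i < n \<Longrightarrow> maximal_dist E [V i] {[t] | t. lo i \<le> t \<and> t \<le> hi i}"
    and "Q \<in> P"
  shows "AE w in Q. vals (map V [0..<n]) w \<in> box_list n lo hi"
proof -
  have "AE w in Q. \<forall>i\<in>{..<n}. lo i \<le> V i w \<and> V i w \<le> hi i"
    using maximal_dist_interval_AE[OF space inH maxV \<open>Q \<in> P\<close>] by (intro AE_finite_allI) auto
  then show ?thesis
    by eventually_elim (simp add: vals_def box_list_def)
qed

lemma maximal_dist_box_if_seq_indep:
  assumes space: "sublinear_expectation_space \<Omega> H P E"
    and inH: "\<And>i. i < d \<Longrightarrow> V i \<in> H"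
    and le: "\<And>i. i < d \<Longrightarrow> lo i \<le> hi i"
    and maxV: "\<And>i. i < d \<Longrightarrow> maximal_dist E [V i] {[t] | t. lo i \<le> t \<and> t \<le> hi i}"
    and indep: "seq_indep E (map V [0..<d])"
  shows "maximal_dist E (map V [0..<d]) (box_list d lo hi)"
proof -
  have "maximal_dist E (map V [0..<m]) (box_list m lo hi)" if "m \<le> d" for m
    using that
  proof (induction m)
    case 0
    show ?case
      by (simp add: maximal_dist_iff has_max_on_def vals_def expectation_const[OF space])
  next
    case (Suc m)
    have "indep_of E (map V [0..<m]) [V m]"
      using seq_indep_imp_indep_of_take[OF space indep, of m] Suc.prems by (simp add: take_map)
    moreover have "AE w in Q. vals (map V [0..<m] @ [V m]) w \<in> box_list (Suc m) lo hi"
      if "Q \<in> P" for Q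
      using AE_vals_in_box_list[OF space _ _ that, of "Suc m" V lo hi] inH maxV Suc.prems by simp
    ultimately have "maximal_dist E (map V [0..<m] @ [V m]) (box_list (Suc m) lo hi)"
      using Suc inH le maxV
      by (intro maximal_dist_append_if_indep_of[OF space]) auto
    then show ?case
      by simp
  qed
  then show ?thesis
    by simp
qed

lemma seq_indep_permute:
  assumes space: "sublinear_expectation_space \<Omega> H P E"
    and inH: "\<And>i. i < d \<Longrightarrow> V i \<in> H"
    and le: "\<And>i. i < d \<Longrightarrow> lo i \<le> hi i"
    and maxV: "\<And>i. i < d \<Longrightarrow> maximal_dist E [V i] {[t] | t. lo i \<le> t \<and> t \<le> hi i}"
    and indep: "seq_indep E (map V [0..<d])" and p: "p permutes {0..<d}"
  shows "seq_indep E (map (\<lambda>j. V (p j)) [0..<d])"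
proof (rule seq_indep_if_maximal_dist_box)
  have p': "p permutes {..<d}"
    using p by (simp add: atLeast0LessThan)
  have "maximal_dist E (permute_list p (map V [0..<d])) (permute_list p ` box_list d lo hi)"
    using maximal_dist_box_if_seq_indep[OF space inH le maxV indep] p'
    by (intro maximal_dist_permute_list) simp_all
  then show "maximal_dist E (map (\<lambda>j. V (p j)) [0..<d])
      (box_list d (\<lambda>j. lo (p j)) (\<lambda>j. hi (p j)))"
    by (simp add: permute_list_map_upt[OF p] permute_list_box_list[OF p'])
qed (use permutes_in_image[OF p] maxV le in simp_all)

theorem mainTheorem6:
  fixes \<Omega> :: "'w set" and H :: "('w \<Rightarrow> real) set" and P :: "'w measure set"
    and E :: "('w \<Rightarrow> real) \<Rightarrow> real"
    and d :: nat and V :: "nat \<Rightarrow> 'w \<Rightarrow> real" and lo hi :: "nat \<Rightarrow> real"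
  assumes space: "sublinear_expectation_space \<Omega> H P E"
    and inH: "\<And>i. i < d \<Longrightarrow> V i \<in> H"
    and le: "\<And>i. i < d \<Longrightarrow> lo i \<le> hi i"
    and maxV: "\<And>i. i < d \<Longrightarrow> maximal_dist E [V i] {[t] | t. lo i \<le> t \<and> t \<le> hi i}"
  shows "(seq_indep E (map V [0..<d]) \<longleftrightarrow>
            (\<forall>p. p permutes {0..<d} \<longrightarrow> seq_indep E (map (\<lambda>j. V (p j)) [0..<d])))
       \<and> (seq_indep E (map V [0..<d]) \<longleftrightarrow>
            maximal_dist E (map V [0..<d]) (box_list d lo hi))"
proof -
  have "seq_indep E (map V [0..<d]) \<longleftrightarrow> maximal_dist E (map V [0..<d]) (box_list d lo hi)"
  proof
    show "seq_indep E (map V [0..<d]) \<Longrightarrow> maximal_dist E (map V [0..<d]) (box_list d lo hi)"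
      by (rule maximal_dist_box_if_seq_indep[OF space inH le maxV])
    show "maximal_dist E (map V [0..<d]) (box_list d lo hi) \<Longrightarrow> seq_indep E (map V [0..<d])"
      by (rule seq_indep_if_maximal_dist_box[OF _ maxV le])
  qed
  moreover have "seq_indep E (map V [0..<d]) \<longleftrightarrow>
      (\<forall>p. p permutes {0..<d} \<longrightarrow> seq_indep E (map (\<lambda>j. V (p j)) [0..<d]))"
  proof
    show "seq_indep E (map V [0..<d]) \<Longrightarrow>
        \<forall>p. p permutes {0..<d} \<longrightarrow> seq_indep E (map (\<lambda>j. V (p j)) [0..<d])"
      using seq_indep_permute[of \<Omega> H P E d V lo hi] space inH le maxV by blast
    assume "\<forall>p. p permutes {0..<d} \<longrightarrow> seq_indep E (map (\<lambda>j. V (p j)) [0..<d])"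
    from this[rule_format, OF permutes_id] show "seq_indep E (map V [0..<d])"
      by simp
  qed
  ultimately show ?thesis
    by blast
qed

end
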